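(* For $\theta>0$ and $1\le q<\infty$, the small Lebesgue sequence space $l^{q)',\theta}$ is a Banach space.
   Context: Let $X$ be one of $\mathbb N,\mathbb N_0,\mathbb Z$. For $\theta>0$ and $1\le q<\infty$, the small Lebesgue sequence space $l^{q)',\theta}$ is the space of all sequences $y=\{y_k\}_{k\in X}$ such that $$\|y\|_{l^{q)',\theta}}:=\inf\Big\{\sum_{j\in X}\inf_{\varepsilon>0}\varepsilon^{\frac{-\theta}{q(1+\varepsilon)}}\Big(\sum_{k\in X}y_{k,j}^{(q(1+\varepsilon))'}\Big)^{\frac{1}{(q(1+\varepsilon))'}}\Big\}<\infty,$$ where the outer infimum is over all decompositions $|y_k|=\sum_{j\in X}y_{k,j}$ ($k\in X$) with all $y_{k,j}\ge0$, and $(q(1+\varepsilon))'$ is the conjugate exponent of $q(1+\varepsilon)$. *)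

theory Defs
  imports "HOL-Analysis.Analysis"
begin

text \<open>Sequences are real-valued functions on int, supported on the index set X,
  where X is one of N = {1..}, N0 = {0..}, Z = UNIV.\<close>

definition conj_exp :: "real \<Rightarrow> real" where
  "conj_exp p = p / (p - 1)"

definition enn_powr :: "ennreal \<Rightarrow> real \<Rightarrow> ennreal" where
  "enn_powr s r = (if s = \<infinity> then \<infinity> else ennreal (enn2real s powr r))"

definition lconj_norm :: "int set \<Rightarrow> real \<Rightarrow> (int \<Rightarrow> real) \<Rightarrow> ennreal" where
  "lconj_norm X p z =
     enn_powr (\<Sum>\<^sub>\<infinity> k\<in>X. ennreal (z k powr conj_exp p)) (1 / conj_exp p)"

definition small_inner :: "int set \<Rightarrow> real \<Rightarrow> real \<Rightarrow> (int \<Rightarrow> real) \<Rightarrow> ennreal" where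
  "small_inner X q \<theta> z =
     (INF \<epsilon>\<in>{0<..}. ennreal (\<epsilon> powr (- \<theta> / (q * (1 + \<epsilon>)))) * lconj_norm X (q * (1 + \<epsilon>)) z)"

definition small_decomps :: "int set \<Rightarrow> (int \<Rightarrow> real) \<Rightarrow> (int \<Rightarrow> int \<Rightarrow> real) set" where
  "small_decomps X y = {d. \<forall>k\<in>X. (\<forall>j\<in>X. d k j \<ge> 0) \<and> ((\<lambda>j. d k j) has_sum \<bar>y k\<bar>) X}"

definition small_norm_enn :: "int set \<Rightarrow> real \<Rightarrow> real \<Rightarrow> (int \<Rightarrow> real) \<Rightarrow> ennreal" where
  "small_norm_enn X q \<theta> y =
     (INF d\<in>small_decomps X y. \<Sum>\<^sub>\<infinity> j\<in>X. small_inner X q \<theta> (\<lambda>k. d k j))"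

definition small_leb_space :: "int set \<Rightarrow> real \<Rightarrow> real \<Rightarrow> (int \<Rightarrow> real) set" where
  "small_leb_space X q \<theta> = {y. (\<forall>k. k \<notin> X \<longrightarrow> y k = 0) \<and> small_norm_enn X q \<theta> y < \<infinity>}"

definition small_norm :: "int set \<Rightarrow> real \<Rightarrow> real \<Rightarrow> (int \<Rightarrow> real) \<Rightarrow> real" where
  "small_norm X q \<theta> y = enn2real (small_norm_enn X q \<theta> y)"

end

theory Submission
  imports Defs
begin

(* Write N for the small norm and I for the inner quantity, so that N(y) is the infimum of
   \<Sum>_j I(y_{.,j}) over decompositions of |y|. I is monotone and positively homogeneous in the
   column. The key fact is that N(u) \<le> \<Sum>_j I(D_j) for every countable family of nonnegative
   columns D_j whose sums dominate |u|: as X is infinite the family can be relabelled by indices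
   in X, and scaling row k by |u_k| / \<Sum>_j D_{k,j} makes it an exact decomposition of |u|.
   Concatenating almost optimal decompositions then gives the triangle inequality and, more
   generally, N(\<Sum>_i g_i) \<le> \<Sum>_i N(g_i) for pointwise absolutely convergent series.
   Since \<epsilon>^(-\<theta>/(q(1+\<epsilon>))) \<ge> exp(-\<theta>/q) and an l^p' norm dominates each coordinate,
   |y_k| \<le> exp(\<theta>/q) N(y). Hence N is definite, and for a Cauchy sequence the telescoping
   series along a fast subsequence converges pointwise, with tails controlled by the series
   bound; so the space is complete. *)

section \<open>Sums and infima in the extended nonnegative reals\<close>

lemma ennreal_mult_INF:
  fixes c :: ennreal
  assumes "c < top" "I \<noteq> {}"
  shows "c * (INF i\<in>I. f i) = (INF i\<in>I. c * f i)"
proof -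
  have "(\<lambda>x. c * x) (Inf (f ` I)) = (INF s\<in>f ` I. c * s)"
  proof (rule continuous_at_Inf_mono)
    have "continuous_on UNIV (\<lambda>x. c * x)"
      using ennreal_continuous_on_cmult[OF assms(1) continuous_on_id] by simp
    then show "continuous (at_right (Inf (f ` I))) (\<lambda>x. c * x)"
      by (simp add: continuous_on_eq_continuous_at continuous_at_imp_continuous_within)
  qed (auto simp: mono_def mult_left_mono assms)
  then show ?thesis by (simp add: image_comp)
qed

lemma has_sum_ennreal:
  fixes f :: "'a \<Rightarrow> real"
  assumes "(f has_sum s) A" "\<And>x. x \<in> A \<Longrightarrow> 0 \<le> f x"
  shows "((\<lambda>x. ennreal (f x)) has_sum ennreal s) A"
proof -
  have "((ennreal \<circ> f) has_sum ennreal s) A"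
    by (rule has_sum_comm_additive_general)
      (auto simp: assms sum_ennreal subset_iff intro!: tendsto_ennrealI tendsto_ident_at)
  then show ?thesis by (simp add: o_def)
qed

lemma infsum_ennreal:
  fixes f :: "'a \<Rightarrow> real"
  assumes "(f has_sum s) A" "\<And>x. x \<in> A \<Longrightarrow> 0 \<le> f x"
  shows "(\<Sum>\<^sub>\<infinity>x\<in>A. ennreal (f x)) = ennreal s"
  using has_sum_ennreal[OF assms] by (rule infsumI)

lemma infsum_Sigma_le_ennreal:
  fixes f :: "'a \<times> 'b \<Rightarrow> ennreal"
  shows "infsum f (Sigma A B) \<le> (\<Sum>\<^sub>\<infinity>x\<in>A. \<Sum>\<^sub>\<infinity>y\<in>B x. f (x, y))"
proof (rule infsum_le_finite_sums)
  fix F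
  assume F: "finite F" "F \<subseteq> Sigma A B"
  define G where "G x = {y. (x, y) \<in> F}" for x
  have "G x \<subseteq> snd ` F" for x
    by (force simp: G_def)
  then have G: "finite (G x)" "G x \<subseteq> B x" for x
    using F by (auto simp: G_def intro: finite_subset)
  have "F = Sigma (fst ` F) G"
    by (force simp: G_def)
  then have "sum f F = (\<Sum>x\<in>fst ` F. \<Sum>y\<in>G x. f (x, y))"
    using F(1) G(1) sum.Sigma[of "fst ` F" G "\<lambda>x y. f (x, y)"] by simp
  also have "\<dots> \<le> (\<Sum>x\<in>fst ` F. \<Sum>\<^sub>\<infinity>y\<in>B x. f (x, y))"
    using G by (intro sum_mono)
      (auto intro!: infsum_mono_neutral nonneg_summable_on_complete simp flip: infsum_finite)
  also have "\<dots> \<le> (\<Sum>\<^sub>\<infinity>x\<in>A. \<Sum>\<^sub>\<infinity>y\<in>B x. f (x, y))"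
    using F by (auto intro!: infsum_mono_neutral nonneg_summable_on_complete simp flip: infsum_finite)
  finally show "sum f F \<le> (\<Sum>\<^sub>\<infinity>x\<in>A. \<Sum>\<^sub>\<infinity>y\<in>B x. f (x, y))" .
qed (rule nonneg_summable_on_complete, simp)

lemma infsum_cmult_ennreal:
  fixes f :: "'a \<Rightarrow> ennreal"
  shows "(\<Sum>\<^sub>\<infinity>x\<in>A. c * f x) = c * (\<Sum>\<^sub>\<infinity>x\<in>A. f x)"
  by (simp add: nonneg_infsum_complete SUP_mult_left_ennreal sum_distrib_left)

lemma cauchy_fast_subseq:
  fixes d :: "nat \<Rightarrow> nat \<Rightarrow> real"
  assumes "\<forall>e>0. \<exists>M. \<forall>m\<ge>M. \<forall>n\<ge>M. d m n < e"
  obtains r :: "nat \<Rightarrow> nat"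
  where "mono r" and "\<And>i m n. r i \<le> m \<Longrightarrow> r i \<le> n \<Longrightarrow> d m n < (1 / 2) ^ i"
proof -
  have "\<forall>i. \<exists>M. \<forall>m\<ge>M. \<forall>n\<ge>M. d m n < (1 / 2) ^ i"
    using assms by simp
  then obtain M where M: "\<And>i m n. M i \<le> m \<Longrightarrow> M i \<le> n \<Longrightarrow> d m n < (1 / 2) ^ i"
    by metis
  define r where "r i = (\<Sum>l\<le>i. M l)" for i
  have "mono r"
    unfolding r_def mono_def by (auto intro: sum_mono2)
  moreover have "M i \<le> r i" for i
    unfolding r_def by (rule member_le_sum) auto
  ultimately show thesis
    using M that le_trans by meson
qed

section \<open>The weighted dual norms\<close>

lemma enn_powr_ennreal: "0 \<le> x \<Longrightarrow> enn_powr (ennreal x) r = ennreal (x powr r)"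
  by (simp add: enn_powr_def)

lemma enn_powr_mono:
  assumes "0 \<le> r" "s \<le> t"
  shows "enn_powr s r \<le> enn_powr t r"
proof (cases "t = \<infinity>")
  case True
  then show ?thesis by (simp add: enn_powr_def)
next
  case False
  with assms(2) have "s \<noteq> \<infinity>" by (auto simp: top_unique)
  with False assms(2) have "enn2real s \<le> enn2real t"
    by (intro enn2real_mono) (auto simp: top.not_eq_extremum)
  with False \<open>s \<noteq> \<infinity>\<close> assms(1) show ?thesis
    by (auto simp: enn_powr_def intro!: ennreal_leI powr_mono2)
qed

lemma enn_powr_cmult:
  assumes "0 < a" "0 \<le> c"
  shows "enn_powr (ennreal (c powr a) * S) (1 / a) = ennreal c * enn_powr S (1 / a)"
proof (cases "S = \<infinity>")
  case True
  then show ?thesis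
    using assms by (cases "c = 0") (auto simp: enn_powr_def ennreal_mult_top)
next
  case False
  then obtain s where s: "S = ennreal s" "0 \<le> s" by (cases S) auto
  have "(c powr a * s) powr (1 / a) = c * s powr (1 / a)"
    using assms s by (simp add: powr_mult powr_powr)
  then show ?thesis
    using assms s by (simp add: enn_powr_ennreal ennreal_mult[symmetric])
qed

lemma conj_exp_pos: "1 < p \<Longrightarrow> 0 < conj_exp p"
  unfolding conj_exp_def by auto

lemma lconj_norm_mono:
  assumes "1 < p" "\<And>k. k \<in> X \<Longrightarrow> 0 \<le> z k \<and> z k \<le> w k"
  shows "lconj_norm X p z \<le> lconj_norm X p w"
  unfolding lconj_norm_def
  using assms conj_exp_pos[OF assms(1)]
  by (intro enn_powr_mono infsum_mono nonneg_summable_on_complete) (auto intro!: ennreal_leI powr_mono2)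

lemma lconj_norm_cmult:
  assumes "1 < p" "0 \<le> c" "\<And>k. k \<in> X \<Longrightarrow> 0 \<le> z k"
  shows "lconj_norm X p (\<lambda>k. c * z k) = ennreal c * lconj_norm X p z"
proof -
  let ?a = "conj_exp p"
  have "(\<Sum>\<^sub>\<infinity>k\<in>X. ennreal ((c * z k) powr ?a))
      = (\<Sum>\<^sub>\<infinity>k\<in>X. ennreal (c powr ?a) * ennreal (z k powr ?a))"
    using assms by (intro infsum_cong) (simp add: powr_mult ennreal_mult)
  also have "\<dots> = ennreal (c powr ?a) * (\<Sum>\<^sub>\<infinity>k\<in>X. ennreal (z k powr ?a))"
    by (rule infsum_cmult_ennreal)
  finally show ?thesis
    unfolding lconj_norm_def using enn_powr_cmult[OF conj_exp_pos[OF assms(1)] assms(2)] by simp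
qed

lemma coordinate_le_lconj_norm:
  assumes "1 < p" "\<And>k. k \<in> X \<Longrightarrow> 0 \<le> z k" "k \<in> X"
  shows "ennreal (z k) \<le> lconj_norm X p z"
proof -
  let ?a = "conj_exp p"
  have a: "0 < ?a" using conj_exp_pos[OF assms(1)] .
  have "ennreal (z k powr ?a) = (\<Sum>\<^sub>\<infinity>i\<in>{k}. ennreal (z i powr ?a))" by simp
  also have "\<dots> \<le> (\<Sum>\<^sub>\<infinity>i\<in>X. ennreal (z i powr ?a))"
    using assms(3) by (intro infsum_mono_neutral nonneg_summable_on_complete) auto
  finally have "enn_powr (ennreal (z k powr ?a)) (1 / ?a) \<le> lconj_norm X p z"
    unfolding lconj_norm_def using a by (intro enn_powr_mono) simp_all
  then show ?thesis
    using a assms by (simp add: enn_powr_ennreal powr_powr)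
qed

lemma one_less_mult_one_plus: "1 \<le> q \<Longrightarrow> 0 < e \<Longrightarrow> 1 < q * (1 + e :: real)"
  by (smt (verit) mult_le_cancel_left1 mult_less_cancel_left1)

lemma small_inner_mono:
  assumes "1 \<le> q" "\<And>k. k \<in> X \<Longrightarrow> 0 \<le> z k \<and> z k \<le> w k"
  shows "small_inner X q \<theta> z \<le> small_inner X q \<theta> w"
  unfolding small_inner_def
proof (rule INF_mono)
  fix e :: real
  assume "e \<in> {0<..}"
  then have "lconj_norm X (q * (1 + e)) z \<le> lconj_norm X (q * (1 + e)) w"
    using assms one_less_mult_one_plus[OF assms(1)] by (intro lconj_norm_mono) auto
  then show "\<exists>e'\<in>{0<..}. ennreal (e' powr (- \<theta> / (q * (1 + e')))) * lconj_norm X (q * (1 + e')) z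
      \<le> ennreal (e powr (- \<theta> / (q * (1 + e)))) * lconj_norm X (q * (1 + e)) w"
    using \<open>e \<in> {0<..}\<close> by (intro bexI[of _ e] mult_left_mono) auto
qed

lemma small_inner_cmult:
  assumes "1 \<le> q" "0 \<le> c" "\<And>k. k \<in> X \<Longrightarrow> 0 \<le> z k"
  shows "small_inner X q \<theta> (\<lambda>k. c * z k) = ennreal c * small_inner X q \<theta> z"
proof -
  have "small_inner X q \<theta> (\<lambda>k. c * z k) =
     (INF e\<in>{0<..}. ennreal c * (ennreal (e powr (- \<theta> / (q * (1 + e)))) * lconj_norm X (q * (1 + e)) z))"
    unfolding small_inner_def
    using assms one_less_mult_one_plus[OF assms(1)]
    by (intro INF_cong) (auto simp: lconj_norm_cmult ac_simps)
  also have "\<dots> = ennreal c * small_inner X q \<theta> z"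
    unfolding small_inner_def by (rule ennreal_mult_INF[symmetric]) auto
  finally show ?thesis .
qed

lemma small_inner_zero: "1 \<le> q \<Longrightarrow> small_inner X q \<theta> (\<lambda>k. 0) = 0"
  using small_inner_cmult[of q 0 X "\<lambda>k. 0" \<theta>] by simp

lemma exp_le_small_weight:
  fixes q \<theta> e :: real
  assumes "0 < q" "0 \<le> \<theta>" "0 < e"
  shows "exp (- \<theta> / q) \<le> e powr (- \<theta> / (q * (1 + e)))"
proof -
  have "ln e / (1 + e) \<le> 1"
    using ln_le_minus_one[OF assms(3)] assms(3) by (simp add: divide_le_eq)
  then have "(\<theta> / q) * (ln e / (1 + e)) \<le> \<theta> / q"
    using assms by (intro mult_left_le) auto
  then have "- \<theta> / q \<le> (- \<theta> / (q * (1 + e))) * ln e"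
    by (simp add: field_simps)
  then show ?thesis
    using assms(3) by (simp add: powr_def)
qed

lemma coordinate_le_small_inner:
  assumes "1 \<le> q" "0 \<le> \<theta>" "\<And>k. k \<in> X \<Longrightarrow> 0 \<le> z k" "k \<in> X"
  shows "ennreal (exp (- \<theta> / q) * z k) \<le> small_inner X q \<theta> z"
  unfolding small_inner_def
proof (rule INF_greatest)
  fix e :: real
  assume "e \<in> {0<..}"
  then have "exp (- \<theta> / q) \<le> e powr (- \<theta> / (q * (1 + e)))"
    and "ennreal (z k) \<le> lconj_norm X (q * (1 + e)) z"
    using assms exp_le_small_weight coordinate_le_lconj_norm one_less_mult_one_plus by auto
  then show "ennreal (exp (- \<theta> / q) * z k)
      \<le> ennreal (e powr (- \<theta> / (q * (1 + e)))) * lconj_norm X (q * (1 + e)) z"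
    using assms by (auto simp: ennreal_mult intro!: mult_mono ennreal_leI)
qed

section \<open>The small norm\<close>

lemma small_norm_enn_eq_small_norm:
  "y \<in> small_leb_space X q \<theta> \<Longrightarrow> small_norm_enn X q \<theta> y = ennreal (small_norm X q \<theta> y)"
  unfolding small_leb_space_def small_norm_def by (auto simp: less_top[symmetric])

lemma small_norm_nonneg: "0 \<le> small_norm X q \<theta> y"
  by (simp add: small_norm_def)

lemma small_leb_space_vanishes: "y \<in> small_leb_space X q \<theta> \<Longrightarrow> k \<notin> X \<Longrightarrow> y k = 0"
  by (simp add: small_leb_space_def)

lemma coordinate_le_small_norm_enn:
  assumes "1 \<le> q" "0 \<le> \<theta>" "k \<in> X"
  shows "ennreal (exp (- \<theta> / q) * \<bar>y k\<bar>) \<le> small_norm_enn X q \<theta> y"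
  unfolding small_norm_enn_def
proof (rule INF_greatest)
  fix d
  assume d: "d \<in> small_decomps X y"
  then have "((\<lambda>j. exp (- \<theta> / q) * d k j) has_sum exp (- \<theta> / q) * \<bar>y k\<bar>) X"
    using assms(3) by (intro has_sum_cmult_right) (simp add: small_decomps_def)
  then have "ennreal (exp (- \<theta> / q) * \<bar>y k\<bar>) = (\<Sum>\<^sub>\<infinity>j\<in>X. ennreal (exp (- \<theta> / q) * d k j))"
    using d assms(3) by (intro infsum_ennreal[symmetric]) (simp_all add: small_decomps_def)
  also have "\<dots> \<le> (\<Sum>\<^sub>\<infinity>j\<in>X. small_inner X q \<theta> (\<lambda>k. d k j))"
    using d assms by (intro infsum_mono coordinate_le_small_inner nonneg_summable_on_complete)
      (auto simp: small_decomps_def)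
  finally show "ennreal (exp (- \<theta> / q) * \<bar>y k\<bar>) \<le> (\<Sum>\<^sub>\<infinity>j\<in>X. small_inner X q \<theta> (\<lambda>k. d k j))" .
qed

lemma abs_le_small_norm:
  assumes "1 \<le> q" "0 \<le> \<theta>" "y \<in> small_leb_space X q \<theta>"
  shows "\<bar>y k\<bar> \<le> exp (\<theta> / q) * small_norm X q \<theta> y"
proof (cases "k \<in> X")
  case True
  then have "exp (- \<theta> / q) * \<bar>y k\<bar> \<le> small_norm X q \<theta> y"
    using coordinate_le_small_norm_enn[OF assms(1,2) True, of y]
    by (simp add: small_norm_enn_eq_small_norm[OF assms(3)] ennreal_le_iff[OF small_norm_nonneg])
  then have "exp (\<theta> / q) * (exp (- \<theta> / q) * \<bar>y k\<bar>) \<le> exp (\<theta> / q) * small_norm X q \<theta> y"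
    by (rule mult_left_mono) simp
  then show ?thesis
    by (simp add: mult.assoc[symmetric] exp_add[symmetric])
next
  case False
  then show ?thesis
    using assms(3) by (simp add: small_leb_space_vanishes small_norm_nonneg)
qed

context
  fixes X :: "int set" and q \<theta> :: real
  assumes infinite_X: "infinite X" and q: "1 \<le> q"
begin

lemma small_decomps_nonempty: "small_decomps X y \<noteq> {}"
proof -
  obtain j0 where "j0 \<in> X"
    using infinite_X infinite_imp_nonempty by blast
  define d where "d = (\<lambda>k j. if j = j0 then \<bar>y k\<bar> else (0::real))"
  have "((\<lambda>j. d k j) has_sum \<bar>y k\<bar>) X" for k
  proof -
    have "((\<lambda>j. d k j) has_sum \<bar>y k\<bar>) {j0}"
      using has_sum_finite[of "{j0}" "\<lambda>j. d k j"] by (simp add: d_def)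
    then show ?thesis
      by (rule has_sum_cong_neutral[THEN iffD1, rotated -1]) (use \<open>j0 \<in> X\<close> in \<open>auto simp: d_def\<close>)
  qed
  then have "d \<in> small_decomps X y"
    by (simp add: small_decomps_def d_def)
  then show ?thesis by blast
qed

lemma small_norm_enn_le_countable_decomp:
  fixes D :: "'j \<Rightarrow> int \<Rightarrow> real"
  assumes J: "countable J"
    and nonneg: "\<And>j k. j \<in> J \<Longrightarrow> k \<in> X \<Longrightarrow> 0 \<le> D j k"
    and sums: "\<And>k. k \<in> X \<Longrightarrow> ((\<lambda>j. D j k) has_sum \<bar>u k\<bar>) J"
  shows "small_norm_enn X q \<theta> u \<le> (\<Sum>\<^sub>\<infinity>j\<in>J. small_inner X q \<theta> (D j))"
proof -
  obtain h :: "'j \<Rightarrow> int" where h: "inj_on h J" "h ` J \<subseteq> X"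
  proof -
    obtain c :: "'j \<Rightarrow> nat" where "inj_on c J"
      using J by (rule countableE)
    moreover obtain e :: "nat \<Rightarrow> int" where "inj e" "range e \<subseteq> X"
      using infinite_countable_subset[OF infinite_X] by blast
    ultimately show thesis
      by (intro that[of "e \<circ> c"] comp_inj_on) (auto intro: inj_on_subset)
  qed
  \<comment> \<open>Indices of X outside h ` J get the zero column, whose inner quantity is 0.\<close>
  define d where "d k i = (if i \<in> h ` J then D (inv_into J h i) k else 0)" for k i
  have column: "(\<lambda>k. d k (h j)) = D j" if "j \<in> J" for j
    using that h(1) by (auto simp: d_def)
  have "d \<in> small_decomps X u"
    unfolding small_decomps_def
  proof (intro CollectI ballI conjI)
    fix k i
    assume "k \<in> X" "i \<in> X"
    then show "0 \<le> d k i"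
      using nonneg by (auto simp: d_def inv_into_into)
  next
    fix k
    assume k: "k \<in> X"
    have "(((\<lambda>i. d k i) \<circ> h) has_sum \<bar>u k\<bar>) J"
      by (rule has_sum_cong[THEN iffD2, OF _ sums[OF k]]) (use column in \<open>auto dest: fun_cong\<close>)
    then have "((\<lambda>i. d k i) has_sum \<bar>u k\<bar>) (h ` J)"
      by (simp add: has_sum_reindex[OF h(1)])
    then show "((\<lambda>i. d k i) has_sum \<bar>u k\<bar>) X"
      by (rule has_sum_cong_neutral[THEN iffD1, rotated -1]) (use h in \<open>auto simp: d_def\<close>)
  qed
  then have "small_norm_enn X q \<theta> u \<le> (\<Sum>\<^sub>\<infinity>i\<in>X. small_inner X q \<theta> (\<lambda>k. d k i))"
    unfolding small_norm_enn_def by (rule INF_lower)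
  also have "\<dots> = (\<Sum>\<^sub>\<infinity>i\<in>h ` J. small_inner X q \<theta> (\<lambda>k. d k i))"
    by (rule infsum_cong_neutral) (use h q in \<open>auto simp: d_def small_inner_zero\<close>)
  also have "\<dots> = (\<Sum>\<^sub>\<infinity>j\<in>J. small_inner X q \<theta> (D j))"
    by (simp add: infsum_reindex[OF h(1)] o_def column cong: infsum_cong)
  finally show ?thesis .
qed

lemma small_norm_enn_le_dominating:
  fixes D :: "'j \<Rightarrow> int \<Rightarrow> real"
  assumes J: "countable J"
    and nonneg: "\<And>j k. j \<in> J \<Longrightarrow> k \<in> X \<Longrightarrow> 0 \<le> D j k"
    and sums: "\<And>k. k \<in> X \<Longrightarrow> ((\<lambda>j. D j k) has_sum s k) J"
    and dominated: "\<And>k. k \<in> X \<Longrightarrow> \<bar>u k\<bar> \<le> s k"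
  shows "small_norm_enn X q \<theta> u \<le> (\<Sum>\<^sub>\<infinity>j\<in>J. small_inner X q \<theta> (D j))"
proof -
  \<comment> \<open>If s k = 0 then also u k = 0, and the junk value 0 / 0 = 0 gives the zero row.\<close>
  define D' where "D' j k = D j k * (\<bar>u k\<bar> / s k)" for j k
  have D'_bounds: "0 \<le> D' j k \<and> D' j k \<le> D j k" if "j \<in> J" "k \<in> X" for j k
  proof -
    have "0 \<le> \<bar>u k\<bar> / s k" "\<bar>u k\<bar> / s k \<le> 1"
      using dominated[OF that(2)] by (auto simp: divide_le_eq_1)
    then show ?thesis
      using nonneg[OF that] unfolding D'_def by (metis mult_left_le mult_nonneg_nonneg)
  qed
  have "small_norm_enn X q \<theta> u \<le> (\<Sum>\<^sub>\<infinity>j\<in>J. small_inner X q \<theta> (D' j))"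
  proof (rule small_norm_enn_le_countable_decomp[OF J])
    show "0 \<le> D' j k" if "j \<in> J" "k \<in> X" for j k
      using D'_bounds[OF that] by simp
    show "((\<lambda>j. D' j k) has_sum \<bar>u k\<bar>) J" if "k \<in> X" for k
    proof (cases "s k = 0")
      case True
      then show ?thesis
        using dominated[OF that] by (simp add: D'_def)
    next
      case False
      then show ?thesis
        using has_sum_cmult_left[OF sums[OF that], of "\<bar>u k\<bar> / s k"] by (simp add: D'_def)
    qed
  qed
  also have "\<dots> \<le> (\<Sum>\<^sub>\<infinity>j\<in>J. small_inner X q \<theta> (D j))"
    using D'_bounds q by (intro infsum_mono small_inner_mono nonneg_summable_on_complete) auto
  finally show ?thesis .
qed

lemma small_norm_enn_le_sum_decomps:
  fixes g :: "'i \<Rightarrow> int \<Rightarrow> real" and d :: "'i \<Rightarrow> int \<Rightarrow> int \<Rightarrow> real"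
  assumes I: "countable I"
    and d: "\<And>i. i \<in> I \<Longrightarrow> d i \<in> small_decomps X (g i)"
    and sums: "\<And>k. k \<in> X \<Longrightarrow> ((\<lambda>i. g i k) has_sum u k) I"
  shows "small_norm_enn X q \<theta> u \<le> (\<Sum>\<^sub>\<infinity>i\<in>I. \<Sum>\<^sub>\<infinity>j\<in>X. small_inner X q \<theta> (\<lambda>k. d i k j))"
proof -
  define s where "s k = (\<Sum>\<^sub>\<infinity>i\<in>I. \<bar>g i k\<bar>)" for k
  have d_nonneg: "0 \<le> d i k j" and d_sums: "((\<lambda>j. d i k j) has_sum \<bar>g i k\<bar>) X"
    if "i \<in> I" "k \<in> X" "j \<in> X" for i k j
    using d[OF that(1)] that(2,3) by (auto simp: small_decomps_def)
  have abs_sums: "((\<lambda>i. \<bar>g i k\<bar>) has_sum s k) I" if "k \<in> X" for k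
  proof -
    have "(\<lambda>i. g i k) summable_on I"
      using sums[OF that] by (rule has_sum_imp_summable)
    then have "(\<lambda>i. \<bar>g i k\<bar>) summable_on I"
      using summable_on_iff_abs_summable_on_real[THEN iffD1] by simp
    then show ?thesis
      unfolding s_def by (rule has_sum_infsum)
  qed
  have "small_norm_enn X q \<theta> u \<le> (\<Sum>\<^sub>\<infinity>p\<in>I \<times> X. small_inner X q \<theta> (\<lambda>k. d (fst p) k (snd p)))"
  proof (rule small_norm_enn_le_dominating)
    show "countable (I \<times> X)"
      using I by simp
    show "0 \<le> d (fst p) k (snd p)" if "p \<in> I \<times> X" "k \<in> X" for p k
      using that d_nonneg by auto
    show "((\<lambda>p. d (fst p) k (snd p)) has_sum s k) (I \<times> X)" if "k \<in> X" for k
    proof -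
      let ?f = "\<lambda>p. d (fst p) k (snd p)"
      have "?f summable_on I \<times> X"
        using d_sums d_nonneg that has_sum_imp_summable[OF abs_sums[OF that]]
        by (intro summable_on_SigmaI[where f = ?f and g = "\<lambda>i. \<bar>g i k\<bar>"]) auto
      then show ?thesis
        using d_sums that abs_sums[OF that]
        by (intro has_sum_SigmaI[where f = ?f and g = "\<lambda>i. \<bar>g i k\<bar>"]) auto
    qed
    show "\<bar>u k\<bar> \<le> s k" if "k \<in> X" for k
      using norm_infsum_le[OF sums[OF that] abs_sums[OF that]] by simp
  qed
  also have "\<dots> \<le> (\<Sum>\<^sub>\<infinity>i\<in>I. \<Sum>\<^sub>\<infinity>j\<in>X. small_inner X q \<theta> (\<lambda>k. d i k j))"
    using infsum_Sigma_le_ennreal[of "\<lambda>p. small_inner X q \<theta> (\<lambda>k. d (fst p) k (snd p))" I "\<lambda>_. X"]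
    by simp
  finally show ?thesis .
qed

lemma small_decomps_approx:
  assumes "0 < e"
  obtains d where "d \<in> small_decomps X y"
    and "(\<Sum>\<^sub>\<infinity>j\<in>X. small_inner X q \<theta> (\<lambda>k. d k j)) \<le> small_norm_enn X q \<theta> y + ennreal e"
proof (cases "small_norm_enn X q \<theta> y = \<infinity>")
  case True
  then show ?thesis
    using small_decomps_nonempty that by auto
next
  case False
  then show ?thesis
    using INF_approx_ennreal[OF assms small_norm_enn_def False] that by (auto intro: less_imp_le)
qed

lemma small_norm_enn_suminf_le:
  fixes g :: "nat \<Rightarrow> int \<Rightarrow> real"
  assumes summable: "\<And>k. k \<in> X \<Longrightarrow> summable (\<lambda>i. \<bar>g i k\<bar>)"
  shows "small_norm_enn X q \<theta> (\<lambda>k. \<Sum>i. g i k) \<le> (\<Sum>\<^sub>\<infinity>i. small_norm_enn X q \<theta> (g i))"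
proof (rule ennreal_le_epsilon)
  fix e :: real
  assume "0 < e"
  define e' where "e' = (\<lambda>i. e * (1 / 2) ^ Suc i)"
  have "\<forall>i. \<exists>d. d \<in> small_decomps X (g i) \<and>
      (\<Sum>\<^sub>\<infinity>j\<in>X. small_inner X q \<theta> (\<lambda>k. d k j)) \<le> small_norm_enn X q \<theta> (g i) + ennreal (e' i)"
  proof
    fix i
    have "0 < e' i"
      using \<open>0 < e\<close> by (simp add: e'_def)
    then show "\<exists>d. d \<in> small_decomps X (g i) \<and>
        (\<Sum>\<^sub>\<infinity>j\<in>X. small_inner X q \<theta> (\<lambda>k. d k j)) \<le> small_norm_enn X q \<theta> (g i) + ennreal (e' i)"
      by (blast elim: small_decomps_approx)
  qed
  then obtain d where d: "\<And>i. d i \<in> small_decomps X (g i)"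
    and d_le: "\<And>i. (\<Sum>\<^sub>\<infinity>j\<in>X. small_inner X q \<theta> (\<lambda>k. d i k j)) \<le> small_norm_enn X q \<theta> (g i) + ennreal (e' i)"
    by metis
  have "e' sums e"
    using sums_mult[OF power_half_series, of e] by (simp add: e'_def)
  then have e'_sum: "(\<Sum>\<^sub>\<infinity>i. ennreal (e' i)) = ennreal e"
    using \<open>0 < e\<close> by (intro infsum_ennreal sums_nonneg_imp_has_sum) (auto simp: e'_def)
  have "small_norm_enn X q \<theta> (\<lambda>k. \<Sum>i. g i k) \<le> (\<Sum>\<^sub>\<infinity>i. \<Sum>\<^sub>\<infinity>j\<in>X. small_inner X q \<theta> (\<lambda>k. d i k j))"
    using d summable
    by (intro small_norm_enn_le_sum_decomps norm_summable_imp_has_sum)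
      (auto intro: summable_sums summable_rabs_cancel)
  also have "\<dots> \<le> (\<Sum>\<^sub>\<infinity>i. small_norm_enn X q \<theta> (g i) + ennreal (e' i))"
    using d_le by (intro infsum_mono nonneg_summable_on_complete) auto
  also have "\<dots> = (\<Sum>\<^sub>\<infinity>i. small_norm_enn X q \<theta> (g i)) + ennreal e"
    using e'_sum by (subst infsum_add) (auto intro: nonneg_summable_on_complete)
  finally show "small_norm_enn X q \<theta> (\<lambda>k. \<Sum>i. g i k) \<le> (\<Sum>\<^sub>\<infinity>i. small_norm_enn X q \<theta> (g i)) + ennreal e" .
qed

lemma small_norm_enn_triangle:
  "small_norm_enn X q \<theta> (\<lambda>k. y k + z k) \<le> small_norm_enn X q \<theta> y + small_norm_enn X q \<theta> z"
proof (rule ennreal_le_epsilon)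
  fix e :: real
  assume "0 < e"
  then obtain dy dz where dy: "dy \<in> small_decomps X y"
    "(\<Sum>\<^sub>\<infinity>j\<in>X. small_inner X q \<theta> (\<lambda>k. dy k j)) \<le> small_norm_enn X q \<theta> y + ennreal (e / 2)"
    and dz: "dz \<in> small_decomps X z"
    "(\<Sum>\<^sub>\<infinity>j\<in>X. small_inner X q \<theta> (\<lambda>k. dz k j)) \<le> small_norm_enn X q \<theta> z + ennreal (e / 2)"
    by (metis small_decomps_approx half_gt_zero)
  define g where "g b = (if b then y else z)" for b
  define d where "d b = (if b then dy else dz)" for b
  have "small_norm_enn X q \<theta> (\<lambda>k. y k + z k) \<le> (\<Sum>\<^sub>\<infinity>b\<in>UNIV. \<Sum>\<^sub>\<infinity>j\<in>X. small_inner X q \<theta> (\<lambda>k. d b k j))"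
  proof (rule small_norm_enn_le_sum_decomps)
    show "d b \<in> small_decomps X (g b)" for b
      using dy dz by (simp add: d_def g_def)
    show "((\<lambda>b. g b k) has_sum y k + z k) UNIV" for k
      using has_sum_finite[of UNIV "\<lambda>b. g b k"] by (simp add: g_def UNIV_bool add.commute)
  qed simp
  also have "\<dots> = (\<Sum>\<^sub>\<infinity>j\<in>X. small_inner X q \<theta> (\<lambda>k. dy k j)) + (\<Sum>\<^sub>\<infinity>j\<in>X. small_inner X q \<theta> (\<lambda>k. dz k j))"
    by (simp add: d_def UNIV_bool add.commute)
  also have "\<dots> \<le> (small_norm_enn X q \<theta> y + ennreal (e / 2)) + (small_norm_enn X q \<theta> z + ennreal (e / 2))"
    using dy dz by (intro add_mono) auto
  also have "\<dots> = small_norm_enn X q \<theta> y + small_norm_enn X q \<theta> z + ennreal e"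
    using \<open>0 < e\<close> by (simp add: ac_simps flip: ennreal_plus)
  finally show "small_norm_enn X q \<theta> (\<lambda>k. y k + z k) \<le> small_norm_enn X q \<theta> y + small_norm_enn X q \<theta> z + ennreal e" .
qed

lemma small_norm_enn_cmult_le:
  "small_norm_enn X q \<theta> (\<lambda>k. c * y k) \<le> ennreal \<bar>c\<bar> * small_norm_enn X q \<theta> y"
proof -
  have "small_norm_enn X q \<theta> (\<lambda>k. c * y k) \<le> ennreal \<bar>c\<bar> * (\<Sum>\<^sub>\<infinity>j\<in>X. small_inner X q \<theta> (\<lambda>k. d k j))"
    if d: "d \<in> small_decomps X y" for d
  proof -
    have "(\<lambda>k j. \<bar>c\<bar> * d k j) \<in> small_decomps X (\<lambda>k. c * y k)"
      using d by (auto simp: small_decomps_def abs_mult intro: has_sum_cmult_right)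
    then have "small_norm_enn X q \<theta> (\<lambda>k. c * y k) \<le> (\<Sum>\<^sub>\<infinity>j\<in>X. small_inner X q \<theta> (\<lambda>k. \<bar>c\<bar> * d k j))"
      unfolding small_norm_enn_def by (rule INF_lower)
    also have "\<dots> = (\<Sum>\<^sub>\<infinity>j\<in>X. ennreal \<bar>c\<bar> * small_inner X q \<theta> (\<lambda>k. d k j))"
      using d q by (intro infsum_cong small_inner_cmult) (auto simp: small_decomps_def)
    finally show ?thesis
      by (simp add: infsum_cmult_ennreal)
  qed
  then have "small_norm_enn X q \<theta> (\<lambda>k. c * y k)
      \<le> (INF d\<in>small_decomps X y. ennreal \<bar>c\<bar> * (\<Sum>\<^sub>\<infinity>j\<in>X. small_inner X q \<theta> (\<lambda>k. d k j)))"
    by (rule INF_greatest)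
  also have "\<dots> = ennreal \<bar>c\<bar> * small_norm_enn X q \<theta> y"
    unfolding small_norm_enn_def by (rule ennreal_mult_INF[symmetric]) (use small_decomps_nonempty in auto)
  finally show ?thesis .
qed

lemma small_norm_enn_cmult:
  "small_norm_enn X q \<theta> (\<lambda>k. c * y k) = ennreal \<bar>c\<bar> * small_norm_enn X q \<theta> y"
proof (cases "c = 0")
  case True
  then show ?thesis
    using small_norm_enn_cmult_le[of 0 y] by simp
next
  case False
  have "ennreal \<bar>c\<bar> * small_norm_enn X q \<theta> y = ennreal \<bar>c\<bar> * small_norm_enn X q \<theta> (\<lambda>k. (1 / c) * (c * y k))"
    using False by simp
  also have "\<dots> \<le> ennreal \<bar>c\<bar> * (ennreal \<bar>1 / c\<bar> * small_norm_enn X q \<theta> (\<lambda>k. c * y k))"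
    by (intro mult_left_mono small_norm_enn_cmult_le) simp
  also have "\<dots> = small_norm_enn X q \<theta> (\<lambda>k. c * y k)"
    using False by (simp add: mult.assoc[symmetric] abs_mult[symmetric] flip: ennreal_mult)
  finally show ?thesis
    using small_norm_enn_cmult_le by (intro antisym)
qed

lemma small_norm_enn_zero: "small_norm_enn X q \<theta> (\<lambda>k. 0) = 0"
  using small_norm_enn_cmult[of 0 "\<lambda>k. 0"] by simp

lemma small_leb_space_zero: "(\<lambda>k. 0) \<in> small_leb_space X q \<theta>"
  by (simp add: small_leb_space_def small_norm_enn_zero)

lemma small_norm_enn_add_le:
  assumes "y \<in> small_leb_space X q \<theta>" "z \<in> small_leb_space X q \<theta>"
  shows "small_norm_enn X q \<theta> (\<lambda>k. y k + z k) \<le> ennreal (small_norm X q \<theta> y + small_norm X q \<theta> z)"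
  using small_norm_enn_triangle[of y z]
  by (simp add: assms small_norm_enn_eq_small_norm small_norm_nonneg flip: ennreal_plus)

lemma small_leb_space_add:
  assumes "y \<in> small_leb_space X q \<theta>" "z \<in> small_leb_space X q \<theta>"
  shows "(\<lambda>k. y k + z k) \<in> small_leb_space X q \<theta>"
  using assms small_norm_enn_add_le[OF assms]
  by (auto simp: small_leb_space_def intro: le_less_trans)

lemma small_norm_triangle:
  assumes "y \<in> small_leb_space X q \<theta>" "z \<in> small_leb_space X q \<theta>"
  shows "small_norm X q \<theta> (\<lambda>k. y k + z k) \<le> small_norm X q \<theta> y + small_norm X q \<theta> z"
  unfolding small_norm_def[of X q \<theta> "\<lambda>k. y k + z k"]
  by (intro enn2real_leI small_norm_enn_add_le assms add_nonneg_nonneg small_norm_nonneg)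

lemma small_norm_cmult: "small_norm X q \<theta> (\<lambda>k. c * y k) = \<bar>c\<bar> * small_norm X q \<theta> y"
  by (simp add: small_norm_def small_norm_enn_cmult enn2real_mult)

lemma small_leb_space_cmult:
  "y \<in> small_leb_space X q \<theta> \<Longrightarrow> (\<lambda>k. c * y k) \<in> small_leb_space X q \<theta>"
  by (auto simp: small_leb_space_def small_norm_enn_cmult ennreal_mult_less_top)

lemma small_leb_space_diff:
  assumes "y \<in> small_leb_space X q \<theta>" "z \<in> small_leb_space X q \<theta>"
  shows "(\<lambda>k. y k - z k) \<in> small_leb_space X q \<theta>"
  using small_leb_space_add[OF assms(1) small_leb_space_cmult[OF assms(2), of "-1"]] by simp

lemma small_norm_eq_0_iff:
  assumes "0 \<le> \<theta>" "y \<in> small_leb_space X q \<theta>"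
  shows "small_norm X q \<theta> y = 0 \<longleftrightarrow> y = (\<lambda>k. 0)"
proof
  assume "small_norm X q \<theta> y = 0"
  then show "y = (\<lambda>k. 0)"
    using abs_le_small_norm[OF q assms] by (auto intro: antisym)
next
  assume "y = (\<lambda>k. 0)"
  then show "small_norm X q \<theta> y = 0"
    by (simp add: small_norm_def small_norm_enn_zero)
qed

lemma summable_abs_small_leb_space:
  assumes "0 \<le> \<theta>" "\<And>i. g i \<in> small_leb_space X q \<theta>"
    and "\<And>i. small_norm X q \<theta> (g i) \<le> b i" "summable b"
  shows "summable (\<lambda>i. \<bar>g i k\<bar>)"
proof (rule summable_comparison_test)
  have "\<bar>g i k\<bar> \<le> exp (\<theta> / q) * b i" for i
    using abs_le_small_norm[OF q assms(1,2)] mult_left_mono[OF assms(3) exp_ge_zero]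
    by (rule order_trans)
  then show "\<exists>N. \<forall>i\<ge>N. norm \<bar>g i k\<bar> \<le> exp (\<theta> / q) * b i"
    by auto
  show "summable (\<lambda>i. exp (\<theta> / q) * b i)"
    using assms(4) by (rule summable_mult)
qed

lemma small_leb_space_suminf:
  assumes "0 \<le> \<theta>" "\<And>i. g i \<in> small_leb_space X q \<theta>"
    and "\<And>i. small_norm X q \<theta> (g i) \<le> b i" "summable b"
  shows "(\<lambda>k. \<Sum>i. g i k) \<in> small_leb_space X q \<theta>"
    and "small_norm X q \<theta> (\<lambda>k. \<Sum>i. g i k) \<le> (\<Sum>i. b i)"
proof -
  have b_nonneg: "0 \<le> b i" for i
    using small_norm_nonneg assms(3) order_trans by metis
  have "small_norm_enn X q \<theta> (\<lambda>k. \<Sum>i. g i k) \<le> (\<Sum>\<^sub>\<infinity>i. small_norm_enn X q \<theta> (g i))"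
    using summable_abs_small_leb_space[OF assms] by (rule small_norm_enn_suminf_le)
  also have "\<dots> \<le> (\<Sum>\<^sub>\<infinity>i. ennreal (b i))"
    using assms(2,3) by (intro infsum_mono nonneg_summable_on_complete) (auto simp: small_norm_enn_eq_small_norm ennreal_leI)
  also have "\<dots> = ennreal (\<Sum>i. b i)"
    using assms(4) b_nonneg by (intro infsum_ennreal sums_nonneg_imp_has_sum) (auto simp: summable_sums)
  finally have le: "small_norm_enn X q \<theta> (\<lambda>k. \<Sum>i. g i k) \<le> ennreal (\<Sum>i. b i)" .
  have "(\<Sum>i. g i k) = 0" if "k \<notin> X" for k
    using small_leb_space_vanishes[OF assms(2) that] by simp
  with le show "(\<lambda>k. \<Sum>i. g i k) \<in> small_leb_space X q \<theta>"
    by (auto simp: small_leb_space_def intro: le_less_trans)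
  show "small_norm X q \<theta> (\<lambda>k. \<Sum>i. g i k) \<le> (\<Sum>i. b i)"
    unfolding small_norm_def using le b_nonneg by (intro enn2real_leI suminf_nonneg assms(4))
qed

lemma small_leb_space_complete:
  assumes \<theta>: "0 \<le> \<theta>" and f: "\<And>n. f n \<in> small_leb_space X q \<theta>"
    and cauchy: "\<forall>e>0. \<exists>M. \<forall>m\<ge>M. \<forall>n\<ge>M. small_norm X q \<theta> (\<lambda>k. f m k - f n k) < e"
  shows "\<exists>y\<in>small_leb_space X q \<theta>. (\<lambda>n. small_norm X q \<theta> (\<lambda>k. f n k - y k)) \<longlonglongrightarrow> 0"
proof -
  obtain r where "mono r"
    and r: "\<And>i m n. r i \<le> m \<Longrightarrow> r i \<le> n \<Longrightarrow> small_norm X q \<theta> (\<lambda>k. f m k - f n k) < (1 / 2) ^ i"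
    using cauchy_fast_subseq[OF cauchy] by blast
  define h where "h = (\<lambda>i k. f (r i) k - f (r (Suc i)) k)"
  have h: "h i \<in> small_leb_space X q \<theta>" for i
    by (simp add: h_def small_leb_space_diff f)
  have h_le: "small_norm X q \<theta> (h i) \<le> (1 / 2) ^ i" for i
    using r[of i "r i" "r (Suc i)"] \<open>mono r\<close> by (simp add: h_def mono_iff_le_Suc)
  have geometric: "summable (\<lambda>i. (1 / 2 :: real) ^ i)"
    by (simp add: summable_geometric)
  define y where "y = (\<lambda>k. f (r 0) k - (\<Sum>i. h i k))"
  have y: "y \<in> small_leb_space X q \<theta>"
    unfolding y_def
    by (intro small_leb_space_diff f small_leb_space_suminf(1)[OF \<theta> h h_le geometric])
  have tail: "(\<lambda>k. f (r m) k - y k) = (\<lambda>k. \<Sum>i. h (i + m) k)" for m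
  proof
    fix k
    have "summable (\<lambda>i. h i k)"
      using summable_abs_small_leb_space[OF \<theta> h h_le geometric] by (rule summable_rabs_cancel)
    then have "(\<Sum>i. h i k) = (\<Sum>i. h (i + m) k) + (f (r 0) k - f (r m) k)"
      using sum_lessThan_telescope'[of "\<lambda>i. f (r i) k" m]
      by (simp add: suminf_split_initial_segment[of _ m] h_def)
    then show "f (r m) k - y k = (\<Sum>i. h (i + m) k)"
      by (simp add: y_def)
  qed
  have tail_le: "small_norm X q \<theta> (\<lambda>k. f (r m) k - y k) \<le> 2 * (1 / 2) ^ m" for m
  proof -
    have "(\<lambda>i. (1 / 2 :: real) ^ (i + m)) sums (2 * (1 / 2) ^ m)"
      using sums_mult[OF geometric_sums[of "1 / 2 :: real"], of "(1 / 2) ^ m"]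
      by (simp add: power_add mult.commute)
    then have "summable (\<lambda>i. (1 / 2 :: real) ^ (i + m))" "(\<Sum>i. (1 / 2 :: real) ^ (i + m)) = 2 * (1 / 2) ^ m"
      by (auto simp: sums_iff)
    moreover have "small_norm X q \<theta> (\<lambda>k. \<Sum>i. h (i + m) k) \<le> (\<Sum>i. (1 / 2) ^ (i + m))"
      by (rule small_leb_space_suminf(2)[OF \<theta>]) (use h h_le calculation in auto)
    ultimately show ?thesis
      unfolding tail by simp
  qed
  show ?thesis
  proof (intro bexI[OF _ y] LIMSEQ_I)
    fix e :: real
    assume "0 < e"
    then obtain i where i: "(1 / 2) ^ i < e / 3"
      using real_arch_pow_inv[of "e / 3" "1 / 2"] by auto
    have "norm (small_norm X q \<theta> (\<lambda>k. f n k - y k) - 0) < e" if "r i \<le> n" for n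
    proof -
      have "small_norm X q \<theta> (\<lambda>k. f n k - y k)
          \<le> small_norm X q \<theta> (\<lambda>k. f n k - f (r i) k) + small_norm X q \<theta> (\<lambda>k. f (r i) k - y k)"
        using small_norm_triangle[OF small_leb_space_diff[OF f[of n] f[of "r i"]] small_leb_space_diff[OF f[of "r i"] y]]
        by simp
      also have "\<dots> < (1 / 2) ^ i + 2 * (1 / 2) ^ i"
        using r[of i n "r i"] that tail_le[of i] by simp
      finally show ?thesis
        using i small_norm_nonneg by simp
    qed
    then show "\<exists>N. \<forall>n\<ge>N. norm (small_norm X q \<theta> (\<lambda>k. f n k - y k) - 0) < e"
      by blast
  qed
qed

end

theorem theorem3p5:
  fixes X :: "int set" and q \<theta> :: real
  assumes "\<theta> > 0" and "1 \<le> q" and "X \<in> {{1..}, {0..}, UNIV}"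
  shows "((\<lambda>k. 0) \<in> small_leb_space X q \<theta>) \<and>
    (\<forall>y\<in>small_leb_space X q \<theta>. \<forall>z\<in>small_leb_space X q \<theta>. (\<lambda>k. y k + z k) \<in> small_leb_space X q \<theta>) \<and>
    (\<forall>c::real. \<forall>y\<in>small_leb_space X q \<theta>. (\<lambda>k. c * y k) \<in> small_leb_space X q \<theta>) \<and>
    (\<forall>y\<in>small_leb_space X q \<theta>. (small_norm X q \<theta> y = 0 \<longleftrightarrow> y = (\<lambda>k. 0))) \<and>
    (\<forall>c::real. \<forall>y\<in>small_leb_space X q \<theta>. small_norm X q \<theta> (\<lambda>k. c * y k) = \<bar>c\<bar> * small_norm X q \<theta> y) \<and>
    (\<forall>y\<in>small_leb_space X q \<theta>. \<forall>z\<in>small_leb_space X q \<theta>.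
           small_norm X q \<theta> (\<lambda>k. y k + z k) \<le> small_norm X q \<theta> y + small_norm X q \<theta> z) \<and>
    (\<forall>f::nat \<Rightarrow> int \<Rightarrow> real. (\<forall>n. f n \<in> small_leb_space X q \<theta>) \<and>
           (\<forall>e>0. \<exists>M. \<forall>m\<ge>M. \<forall>n\<ge>M. small_norm X q \<theta> (\<lambda>k. f m k - f n k) < e) \<longrightarrow>
           (\<exists>y\<in>small_leb_space X q \<theta>. (\<lambda>n. small_norm X q \<theta> (\<lambda>k. f n k - y k)) \<longlonglongrightarrow> 0))"
proof -
  have X: "infinite X"
    using assms(3) infinite_Ici[of "0 :: int"] infinite_Ici[of "1 :: int"] by auto
  have \<theta>: "0 \<le> \<theta>"
    using assms(1) by simp
  note q = assms(2)
  show ?thesis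
  proof (intro conjI ballI allI impI)
    fix f :: "nat \<Rightarrow> int \<Rightarrow> real"
    assume "(\<forall>n. f n \<in> small_leb_space X q \<theta>) \<and>
      (\<forall>e>0. \<exists>M. \<forall>m\<ge>M. \<forall>n\<ge>M. small_norm X q \<theta> (\<lambda>k. f m k - f n k) < e)"
    then show "\<exists>y\<in>small_leb_space X q \<theta>. (\<lambda>n. small_norm X q \<theta> (\<lambda>k. f n k - y k)) \<longlonglongrightarrow> 0"
      using small_leb_space_complete[OF X q \<theta>] by blast
  qed (simp_all add: small_leb_space_zero[OF X q] small_leb_space_add[OF X q] small_leb_space_cmult[OF X q]
      small_norm_eq_0_iff[OF X q \<theta>] small_norm_cmult[OF X q] small_norm_triangle[OF X q])
qed

end
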